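(* Let $\Omega$ be a set system on a set $E$ of size $m$, and let $k$ be a positive integer. Then, as polynomials in $q$, $$R_{k\Omega}(q)=\big((1-q)^k+kq(1-q)^{k-1}\big)^m\,R_\Omega\!\left(\frac{kq}{1+(k-1)q}\right).$$
   Context: A set system $\Omega$ on a finite set $E$ is a collection of subsets of $E$ (its faces). Its reliability function $R_\Omega(q)$ is the probability that, when each element of $E$ is selected independently with probability $q$, the set of selected elements is a face. Equivalently, $R_\Omega(q)=\sum_i f_iq^i(1-q)^{|E|-i}$, where $f_i$ is the number of faces of size $i$. For a positive integer $k$, $k\Omega$ is the set system on $E\times\{1,\ldots,k\}$ in which $\{(e_1,i_1),\ldots,(e_r,i_r)\}$ is a face if and only if $e_1,\ldots,e_r$ are pairwise distinct and $\{e_1,\ldots,e_r\}\in\Omega$. *)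

theory Defs
  imports Complex_Main
begin

definition set_system :: "'a set \<Rightarrow> 'a set set \<Rightarrow> bool" where
  "set_system E \<Omega> \<longleftrightarrow> finite E \<and> \<Omega> \<subseteq> Pow E"

definition face_count :: "'a set set \<Rightarrow> nat \<Rightarrow> nat" where
  "face_count \<Omega> i = card {F \<in> \<Omega>. card F = i}"

definition reliability :: "'a set \<Rightarrow> 'a set set \<Rightarrow> real \<Rightarrow> real" where
  "reliability E \<Omega> q = (\<Sum>i = 0..card E. real (face_count \<Omega> i) * q ^ i * (1 - q) ^ (card E - i))"

definition mult_system :: "nat \<Rightarrow> 'a set \<Rightarrow> 'a set set \<Rightarrow> ('a \<times> nat) set set" where
  "mult_system k E \<Omega> = {S. S \<subseteq> E \<times> {1..k} \<and> inj_on fst S \<and> fst ` S \<in> \<Omega>}"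

end

theory Submission
  imports Defs "HOL-Library.FuncSet"
begin

text \<open>A face of \<open>k\<Omega>\<close> is a face \<open>F\<close> of \<open>\<Omega>\<close> together with a choice of one of the \<open>k\<close> copies of
  each element of \<open>F\<close>; it has the same size as \<open>F\<close>, and there are \<open>k\<^bsup>|F|\<^esup>\<close> of them over \<open>F\<close>.
  Hence \<open>R\<^sub>k\<^sub>\<Omega>(q) = \<Sum>\<^sub>F (kq)\<^bsup>|F|\<^esup> (1-q)\<^bsup>km-|F|\<^esup>\<close>. With \<open>d = 1 + (k-1)q = kq + (1-q)\<close>, each summand
  equals \<open>((1-q)\<^bsup>k-1\<^esup> d)\<^bsup>m\<^esup> (kq/d)\<^bsup>|F|\<^esup> ((1-q)/d)\<^bsup>m-|F|\<^esup>\<close>, and \<open>(1-q)/d = 1 - kq/d\<close>.\<close>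

lemma reliability_eq_sum_faces:
  assumes "set_system E \<Omega>"
  shows "reliability E \<Omega> q = (\<Sum>F\<in>\<Omega>. q ^ card F * (1 - q) ^ (card E - card F))"
proof -
  have "finite E" "\<Omega> \<subseteq> Pow E" using assms by (auto simp: set_system_def)
  then have "finite \<Omega>" by (meson finite_Pow_iff finite_subset)
  have card_le: "card ` \<Omega> \<subseteq> {0..card E}"
    using \<open>finite E\<close> \<open>\<Omega> \<subseteq> Pow E\<close> by (auto intro!: card_mono)
  have "(\<Sum>F\<in>\<Omega>. q ^ card F * (1 - q) ^ (card E - card F))
      = (\<Sum>i=0..card E. \<Sum>F\<in>{F\<in>\<Omega>. card F = i}. q ^ card F * (1 - q) ^ (card E - card F))"
    by (rule sum.group[OF \<open>finite \<Omega>\<close> _ card_le, symmetric]) simp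
  also have "\<dots> = (\<Sum>i=0..card E. \<Sum>F\<in>{F\<in>\<Omega>. card F = i}. q ^ i * (1 - q) ^ (card E - i))"
    by (intro sum.cong) auto
  finally show ?thesis
    by (simp add: reliability_def face_count_def mult.assoc)
qed

lemma bij_betw_graphs_PiE:
  "bij_betw (\<lambda>f. (\<lambda>x. (x, f x)) ` F) (F \<rightarrow>\<^sub>E A)
     {S. S \<subseteq> F \<times> A \<and> inj_on fst S \<and> fst ` S = F}"
proof (rule bij_betwI[where g = "\<lambda>S. \<lambda>x\<in>F. THE y. (x, y) \<in> S"])
  show "(\<lambda>f. (\<lambda>x. (x, f x)) ` F) \<in> (F \<rightarrow>\<^sub>E A) \<rightarrow>
          {S. S \<subseteq> F \<times> A \<and> inj_on fst S \<and> fst ` S = F}"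
    by (auto simp: inj_on_def image_image)
next
  have the_eq: "(THE y. (x, y) \<in> S) = y"
    if "inj_on fst S" "(x, y) \<in> S" for S x y
    by (rule the_equality) (use that in \<open>force simp: inj_on_def\<close>)+
  show "(\<lambda>S. \<lambda>x\<in>F. THE y. (x, y) \<in> S) \<in> {S. S \<subseteq> F \<times> A \<and> inj_on fst S \<and> fst ` S = F}
          \<rightarrow> F \<rightarrow>\<^sub>E A"
    by (force simp: the_eq)
  show "(\<lambda>x\<in>F. THE y. (x, y) \<in> (\<lambda>x. (x, f x)) ` F) = f" if "f \<in> F \<rightarrow>\<^sub>E A" for f
    using that by (auto simp: the_eq inj_on_def PiE_def extensional_def)
  show "(\<lambda>x. (x, (\<lambda>x\<in>F. THE y. (x, y) \<in> S) x)) ` F = S"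
    if "S \<in> {S. S \<subseteq> F \<times> A \<and> inj_on fst S \<and> fst ` S = F}" for S
    using that by (force simp: the_eq)
qed

lemma card_graphs:
  assumes "finite F" "finite A"
  shows "card {S. S \<subseteq> F \<times> A \<and> inj_on fst S \<and> fst ` S = F} = card A ^ card F"
  unfolding bij_betw_same_card[OF bij_betw_graphs_PiE, symmetric]
  using assms by (simp add: card_PiE)

lemma reliability_mult_system:
  assumes "set_system E \<Omega>"
  shows "reliability (E \<times> {1..k}) (mult_system k E \<Omega>) q
    = (\<Sum>F\<in>\<Omega>. (real k * q) ^ card F * (1 - q) ^ (card E * k - card F))"
proof -
  have "finite E" "\<Omega> \<subseteq> Pow E" using assms by (auto simp: set_system_def)
  then have "finite \<Omega>" by (meson finite_Pow_iff finite_subset)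
  have sys: "set_system (E \<times> {1..k}) (mult_system k E \<Omega>)"
    using \<open>finite E\<close> by (auto simp: set_system_def mult_system_def)
  then have "finite (mult_system k E \<Omega>)"
    by (meson finite_Pow_iff finite_subset set_system_def)
  define w where "w c = q ^ c * (1 - q) ^ (card E * k - c)" for c
  have fiber: "{S \<in> mult_system k E \<Omega>. fst ` S = F}
      = {S. S \<subseteq> F \<times> {1..k} \<and> inj_on fst S \<and> fst ` S = F}" if "F \<in> \<Omega>" for F
    using that \<open>\<Omega> \<subseteq> Pow E\<close> by (auto simp: mult_system_def; force)
  have card_fst: "card S = card (fst ` S)" if "S \<in> mult_system k E \<Omega>" for S
    using that by (simp add: mult_system_def card_image)
  have "(`) fst ` mult_system k E \<Omega> \<subseteq> \<Omega>" by (auto simp: mult_system_def)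
  from sum.group[OF \<open>finite (mult_system k E \<Omega>)\<close> \<open>finite \<Omega>\<close> this, of "w \<circ> card"]
  have "(\<Sum>S\<in>mult_system k E \<Omega>. w (card S))
      = (\<Sum>F\<in>\<Omega>. \<Sum>S\<in>{S \<in> mult_system k E \<Omega>. fst ` S = F}. w (card F))"
    by (auto simp: card_fst intro!: sum.cong)
  also have "\<dots> = (\<Sum>F\<in>\<Omega>. real k ^ card F * w (card F))"
  proof (rule sum.cong[OF refl])
    fix F assume "F \<in> \<Omega>"
    then have "finite F" using \<open>finite E\<close> \<open>\<Omega> \<subseteq> Pow E\<close> by (auto dest: finite_subset)
    then show "(\<Sum>S\<in>{S \<in> mult_system k E \<Omega>. fst ` S = F}. w (card F)) = real k ^ card F * w (card F)"
      by (simp add: fiber[OF \<open>F \<in> \<Omega>\<close>] card_graphs)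
  qed
  finally show ?thesis
    using reliability_eq_sum_faces[OF sys]
    by (simp add: w_def card_cartesian_product power_mult_distrib mult.assoc)
qed

lemma binomial_weights_rescale:
  fixes a b u :: "'a::field"
  assumes "a + b \<noteq> 0" and "c \<le> m"
  shows "(u * (a + b)) ^ m * ((a / (a + b)) ^ c * (b / (a + b)) ^ (m - c))
    = u ^ m * a ^ c * b ^ (m - c)"
proof -
  define s where "s = a + b"
  have "s ^ m = s ^ c * s ^ (m - c)"
    using \<open>c \<le> m\<close> by (simp flip: power_add)
  then have "(u * s) ^ m * ((a / s) ^ c * (b / s) ^ (m - c))
      = u ^ m * (s ^ c * (a ^ c / s ^ c)) * (s ^ (m - c) * (b ^ (m - c) / s ^ (m - c)))"
    by (simp add: power_mult_distrib power_divide mult_ac)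
  also have "\<dots> = u ^ m * a ^ c * b ^ (m - c)"
    using assms(1) by (simp add: s_def)
  finally show ?thesis by (simp add: s_def)
qed

lemma face_weight_substitution:
  fixes q :: real
  assumes "k \<ge> 1" and "c \<le> m" and "1 + (real k - 1) * q \<noteq> 0"
  defines "d \<equiv> 1 + (real k - 1) * q"
  shows "(real k * q) ^ c * (1 - q) ^ (m * k - c)
    = ((1 - q) ^ k + real k * q * (1 - q) ^ (k - 1)) ^ m
      * ((real k * q / d) ^ c * (1 - real k * q / d) ^ (m - c))"
proof -
  have d_split: "d = real k * q + (1 - q)" by (simp add: d_def algebra_simps)
  have "real k * q + (1 - q) \<noteq> 0" using assms(3) by (simp flip: d_def add: d_split)
  have factor: "(1 - q) ^ k + real k * q * (1 - q) ^ (k - 1) = (1 - q) ^ (k - 1) * d"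
    using \<open>k \<ge> 1\<close> by (cases k) (auto simp: d_split algebra_simps)
  have complement: "1 - real k * q / d = (1 - q) / d"
    using assms(3) by (simp add: d_def field_simps)
  have "m * k - c = (k - 1) * m + (m - c)"
    using \<open>k \<ge> 1\<close> \<open>c \<le> m\<close> by (cases k) (auto simp: algebra_simps)
  then have "(real k * q) ^ c * (1 - q) ^ (m * k - c)
      = ((1 - q) ^ (k - 1)) ^ m * (real k * q) ^ c * (1 - q) ^ (m - c)"
    by (simp only: power_add power_mult) (simp only: mult_ac)
  also have "\<dots> = ((1 - q) ^ (k - 1) * d) ^ m * ((real k * q / d) ^ c * ((1 - q) / d) ^ (m - c))"
    unfolding d_split
    using binomial_weights_rescale[OF \<open>real k * q + (1 - q) \<noteq> 0\<close> \<open>c \<le> m\<close>] by simp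
  finally show ?thesis
    by (simp only: factor complement)
qed

theorem lemma6p1:
  fixes E :: "'a set" and \<Omega> :: "'a set set" and k m :: nat and q :: real
  assumes "set_system E \<Omega>" and "card E = m" and "k \<ge> 1"
    and "1 + (real k - 1) * q \<noteq> 0"
  shows "reliability (E \<times> {1..k}) (mult_system k E \<Omega>) q =
         ((1 - q) ^ k + real k * q * (1 - q) ^ (k - 1)) ^ m
           * reliability E \<Omega> (real k * q / (1 + (real k - 1) * q))"
proof -
  have "card F \<le> m" if "F \<in> \<Omega>" for F
    using that assms(1,2) by (auto simp: set_system_def intro: card_mono)
  then have "reliability (E \<times> {1..k}) (mult_system k E \<Omega>) q
      = (\<Sum>F\<in>\<Omega>. ((1 - q) ^ k + real k * q * (1 - q) ^ (k - 1)) ^ m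
          * ((real k * q / (1 + (real k - 1) * q)) ^ card F
             * (1 - real k * q / (1 + (real k - 1) * q)) ^ (m - card F)))"
    unfolding reliability_mult_system[OF assms(1)] assms(2)
    using face_weight_substitution[OF \<open>k \<ge> 1\<close> _ assms(4)] by (intro sum.cong) auto
  then show ?thesis
    by (simp only: reliability_eq_sum_faces[OF assms(1)] assms(2) sum_distrib_left)
qed

end
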